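(* Let $(\Lambda,d)$ be a rank-2 Bratteli diagram of depth $N$, with $\Lambda^0=\bigsqcup_n\bigsqcup_{j=1}^{c_n}V_{n,j}$ as described in the context. For $0\le n<N$, $1\le j\le c_n$ and $1\le i\le c_{n+1}$: (1) the sets $v\Lambda^{e_1}V_{n+1,i}$, $v\in V_{n,j}$, all have the same cardinality, denoted $A_n(i,j)$; (2) the sets $V_{n,j}\Lambda^{e_1}w$, $w\in V_{n+1,i}$, all have the same cardinality, denoted $B_n(i,j)$; (3) $A_n(i,j)\,|V_{n,j}|=|V_{n,j}\Lambda^{e_1}V_{n+1,i}|=|V_{n+1,i}|\,B_n(i,j)$. The resulting matrices $A_n,B_n\in M_{c_{n+1},c_n}(\mathbb Z_+)$ have no zero rows or columns. Letting $T_n\in M_{c_n}(\mathbb Z_+)$ be the diagonal matrix with $T_n(j,j)=|V_{n,j}|$, we have $A_nT_n=T_{n+1}B_n$ for $0\le n<N$.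
   Context: A $2$-graph is a countable category $\Lambda$ with a functor $d:\Lambda\to\mathbb N^2$ satisfying unique factorisation (if $d(\lambda)=m+n$ there are unique $\mu,\nu$ with $d(\mu)=m,d(\nu)=n,\lambda=\mu\nu$). Vertices $\Lambda^0$ = degree-$0$ paths; $r,s$ range/source; $\Lambda^n=d^{-1}(n)$; $e_1=(1,0),e_2=(0,1)$; $VEW=\{\lambda\in E:r(\lambda)\in V,s(\lambda)\in W\}$ (write $v$ for $\{v\}$). Row-finite: each $v\Lambda^n$ finite. Blue edges: $\Lambda^{e_1}$; red edges: $\Lambda^{e_2}$; red paths: degree in $\mathbb Ne_2$. $\lambda(m,n)$ is the unique path with $\lambda=\lambda'\lambda(m,n)\lambda''$, $d(\lambda')=m$, $d(\lambda(m,n))=n-m$, $\lambda(n)=\lambda(n,n)$. A cycle: $d(\lambda)\ne0$, $r(\lambda)=s(\lambda)$, $\lambda(n)\ne s(\lambda)$ for $0<n<d(\lambda)$; isolated: no $n\le d(\lambda)$ with $r(\lambda)\Lambda^n\setminus\{\lambda(0,n)\}\ne\emptyset$ and no $n\le d(\lambda)$ with $\Lambda^ns(\lambda)\setminus\{\lambda(d(\lambda)-n,d(\lambda))\}\ne\emptyset$. A rank-2 Bratteli diagram of depth $N\in\mathbb N\cup\{\infty\}$ is a row-finite 2-graph with $\Lambda^0=\bigsqcup_{0\le n\le N}V_n$ ($n$ ranging over all of $\mathbb N$ if $N=\infty$), each $V_n$ nonempty and finite, such that: (1) every blue edge $e$ has $r(e)\in V_n$, $s(e)\in V_{n+1}$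 for some $n$; (2) every vertex $v$ with $\Lambda^{e_1}v=\emptyset$ lies in $V_0$ and every vertex $v$ with $v\Lambda^{e_1}=\emptyset$ lies in $V_N$ (if $N=\infty$ there is no vertex with $v\Lambda^{e_1}=\emptyset$); (3) every vertex lies on an isolated cycle consisting of red edges, and every red edge has range and source in the same $V_n$. Consequently each $V_n=\bigsqcup_{j=1}^{c_n}V_{n,j}$ where the $V_{n,j}$ are the vertex sets of the distinct isolated red cycles meeting $V_n$. *)

theory Defs
  imports Main "HOL-Library.Product_Plus" "HOL-Library.Product_Order"
    "HOL-Library.Countable_Set" "HOL-Library.Extended_Nat"
begin

text \<open>A category given by its set of morphisms (paths); objects are identified
with their identity morphisms.  Degrees live in nat \<times> nat with componentwise
order and addition.\<close>

record 'a twograph =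
  paths :: "'a set"
  rg :: "'a \<Rightarrow> 'a"
  sc :: "'a \<Rightarrow> 'a"
  cmp :: "'a \<Rightarrow> 'a \<Rightarrow> 'a"
  dg :: "'a \<Rightarrow> nat \<times> nat"

definition is_2graph :: "'a twograph \<Rightarrow> bool" where
  "is_2graph G \<longleftrightarrow>
     countable (paths G) \<and>
     (\<forall>l\<in>paths G. rg G l \<in> paths G \<and> sc G l \<in> paths G \<and>
        rg G (rg G l) = rg G l \<and> sc G (rg G l) = rg G l \<and>
        rg G (sc G l) = sc G l \<and> sc G (sc G l) = sc G l \<and>
        cmp G (rg G l) l = l \<and> cmp G l (sc G l) = l) \<and>
     (\<forall>l\<in>paths G. \<forall>m\<in>paths G. sc G l = rg G m \<longrightarrow>
        cmp G l m \<in> paths G \<and> rg G (cmp G l m) = rg G l \<and>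
        sc G (cmp G l m) = sc G m \<and> dg G (cmp G l m) = dg G l + dg G m) \<and>
     (\<forall>l\<in>paths G. \<forall>m\<in>paths G. \<forall>k\<in>paths G. sc G l = rg G m \<and> sc G m = rg G k \<longrightarrow>
        cmp G (cmp G l m) k = cmp G l (cmp G m k)) \<and>
     (\<forall>l\<in>paths G. \<forall>m n. dg G l = m + n \<longrightarrow>
        (\<exists>!p. fst p \<in> paths G \<and> snd p \<in> paths G \<and> dg G (fst p) = m \<and>
               dg G (snd p) = n \<and> sc G (fst p) = rg G (snd p) \<and>
               cmp G (fst p) (snd p) = l))"

definition vertices :: "'a twograph \<Rightarrow> 'a set" where
  "vertices G = {l \<in> paths G. dg G l = 0}"

definition row_finite :: "'a twograph \<Rightarrow> bool" where
  "row_finite G \<longleftrightarrow> (\<forall>v\<in>vertices G. \<forall>n. finite {l \<in> paths G. rg G l = v \<and> dg G l = n})"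

text \<open>The segment lambda(m,n), for m \<le> n \<le> d(lambda).\<close>
definition seg :: "'a twograph \<Rightarrow> 'a \<Rightarrow> nat \<times> nat \<Rightarrow> nat \<times> nat \<Rightarrow> 'a" where
  "seg G l m n = (THE u. \<exists>a b. a \<in> paths G \<and> u \<in> paths G \<and> b \<in> paths G \<and>
      dg G a = m \<and> dg G u = n - m \<and> sc G a = rg G u \<and> sc G u = rg G b \<and>
      l = cmp G (cmp G a u) b)"

definition is_cycle :: "'a twograph \<Rightarrow> 'a \<Rightarrow> bool" where
  "is_cycle G l \<longleftrightarrow> l \<in> paths G \<and> dg G l \<noteq> 0 \<and> rg G l = sc G l \<and>
     (\<forall>n. 0 < n \<and> n < dg G l \<longrightarrow> seg G l n n \<noteq> sc G l)"

definition isolated :: "'a twograph \<Rightarrow> 'a \<Rightarrow> bool" where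
  "isolated G l \<longleftrightarrow>
     \<not> (\<exists>n \<le> dg G l. {x \<in> paths G. rg G x = rg G l \<and> dg G x = n} - {seg G l 0 n} \<noteq> {}) \<and>
     \<not> (\<exists>n \<le> dg G l. {x \<in> paths G. sc G x = sc G l \<and> dg G x = n}
                          - {seg G l (dg G l - n) (dg G l)} \<noteq> {})"

definition red_path :: "'a twograph \<Rightarrow> 'a \<Rightarrow> bool" where
  "red_path G l \<longleftrightarrow> fst (dg G l) = 0"

definition cycle_vertices :: "'a twograph \<Rightarrow> 'a \<Rightarrow> 'a set" where
  "cycle_vertices G l = {seg G l m m | m. m \<le> dg G l}"

definition blue_edges :: "'a twograph \<Rightarrow> 'a set \<Rightarrow> 'a set \<Rightarrow> 'a set" where
  "blue_edges G X Y = {e \<in> paths G. dg G e = (1, 0) \<and> rg G e \<in> X \<and> sc G e \<in> Y}"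

text \<open>Rank-2 Bratteli diagram of depth N (N = \<infinity> allowed); V n is the n-th level,
only meaningful for n \<le> N.\<close>
definition rank2_bratteli :: "'a twograph \<Rightarrow> enat \<Rightarrow> (nat \<Rightarrow> 'a set) \<Rightarrow> bool" where
  "rank2_bratteli G N V \<longleftrightarrow>
     is_2graph G \<and> row_finite G \<and>
     (\<forall>n. enat n \<le> N \<longrightarrow> V n \<noteq> {} \<and> finite (V n)) \<and>
     vertices G = (\<Union>n\<in>{n. enat n \<le> N}. V n) \<and>
     (\<forall>m n. enat m \<le> N \<and> enat n \<le> N \<and> m \<noteq> n \<longrightarrow> V m \<inter> V n = {}) \<and>
     (\<forall>e\<in>paths G. dg G e = (1, 0) \<longrightarrow>
        (\<exists>n. enat (Suc n) \<le> N \<and> rg G e \<in> V n \<and> sc G e \<in> V (Suc n))) \<and>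
     (\<forall>v\<in>vertices G. {e \<in> paths G. dg G e = (1, 0) \<and> sc G e = v} = {} \<longrightarrow> v \<in> V 0) \<and>
     (\<forall>v\<in>vertices G. {e \<in> paths G. dg G e = (1, 0) \<and> rg G e = v} = {} \<longrightarrow>
        N \<noteq> \<infinity> \<and> v \<in> V (the_enat N)) \<and>
     (\<forall>v\<in>vertices G. \<exists>l. is_cycle G l \<and> isolated G l \<and> red_path G l \<and>
        v \<in> cycle_vertices G l) \<and>
     (\<forall>e\<in>paths G. dg G e = (0, 1) \<longrightarrow>
        (\<exists>n. enat n \<le> N \<and> rg G e \<in> V n \<and> sc G e \<in> V n))"

definition cycle_classes :: "'a twograph \<Rightarrow> (nat \<Rightarrow> 'a set) \<Rightarrow> nat \<Rightarrow> 'a set set" where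
  "cycle_classes G V n = {cycle_vertices G l | l.
      is_cycle G l \<and> isolated G l \<and> red_path G l \<and> cycle_vertices G l \<inter> V n \<noteq> {}}"

text \<open>Matrix entries, indexed by the cycle classes Y (row, level n+1) and X (column, level n).\<close>
definition Amat :: "'a twograph \<Rightarrow> 'a set \<Rightarrow> 'a set \<Rightarrow> nat" where
  "Amat G Y X = card (blue_edges G {SOME v. v \<in> X} Y)"

definition Bmat :: "'a twograph \<Rightarrow> 'a set \<Rightarrow> 'a set \<Rightarrow> nat" where
  "Bmat G Y X = card (blue_edges G X {SOME w. w \<in> Y})"

definition Tmat :: "'a set \<Rightarrow> 'a set \<Rightarrow> nat" where
  "Tmat X X' = (if X = X' then card X else 0)"

end

theory Submission
  imports Defs
begin

text \<open>Every class \<open>V\<^sub>n\<^sub>,\<^sub>j\<close> is the vertex set of an isolated red cycle: each of its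
  vertices \<open>v\<close> is the range of exactly one red edge, and passing to the source of that edge
  walks once around the cycle. By unique factorisation a blue edge \<open>e \<in> v\<Lambda>\<^sup>e\<^sup>1Y\<close>
  followed by the red edge with range \<open>s(e)\<close> equals the red edge \<open>f\<close> with range \<open>v\<close>
  followed by a blue edge in \<open>s(f)\<Lambda>\<^sup>e\<^sup>1Y\<close>, and this blue edge determines \<open>e\<close>.
  Hence \<open>|v\<Lambda>\<^sup>e\<^sup>1Y|\<close> can only grow along the cycle, so it is constant; dually for
  \<open>|X\<Lambda>\<^sup>e\<^sup>1w|\<close>, where one uses that moving along a cycle is injective. Counting
  \<open>X\<Lambda>\<^sup>e\<^sup>1Y\<close> by ranges and by sources gives \<open>A(Y,X)|X| = |X\<Lambda>\<^sup>e\<^sup>1Y| = |Y|B(Y,X)\<close>,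
  which is \<open>A T = T B\<close> entrywise. Rows and columns are nonzero because the level
  conditions provide a blue edge into every vertex above level 0 and out of every vertex
  below level \<open>N\<close>.\<close>

definition red_edges_to :: "'a twograph \<Rightarrow> 'a \<Rightarrow> 'a set" where
  "red_edges_to G v = {e \<in> paths G. dg G e = (0, 1) \<and> rg G e = v}"

text \<open>Only meaningful when \<open>v\<close> is the range of exactly one red edge.\<close>
definition red_edge_to :: "'a twograph \<Rightarrow> 'a \<Rightarrow> 'a" where
  "red_edge_to G v = the_elem (red_edges_to G v)"

definition red_source :: "'a twograph \<Rightarrow> 'a \<Rightarrow> 'a" where
  "red_source G v = sc G (red_edge_to G v)"

definition red_closed :: "'a twograph \<Rightarrow> 'a set \<Rightarrow> bool" where
  "red_closed G X \<longleftrightarrow> (\<forall>v\<in>X. \<exists>e. red_edges_to G v = {e} \<and> sc G e \<in> X)"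

definition red_loop :: "'a twograph \<Rightarrow> (nat \<Rightarrow> 'a) \<Rightarrow> nat \<Rightarrow> bool" where
  "red_loop G x k \<longleftrightarrow> 0 < k \<and> x k = x 0 \<and>
     (\<forall>j<k. \<exists>e. red_edges_to G (x j) = {e} \<and> sc G e = x (Suc j))"

locale two_graph =
  fixes G :: "'a twograph"
  assumes is_2graph: "is_2graph G"
begin

lemma path_ends:
  assumes "l \<in> paths G"
  shows "rg G l \<in> paths G" "sc G l \<in> paths G"
    "rg G (rg G l) = rg G l" "sc G (rg G l) = rg G l"
    "rg G (sc G l) = sc G l" "sc G (sc G l) = sc G l"
    "cmp G (rg G l) l = l" "cmp G l (sc G l) = l"
  using assms is_2graph unfolding is_2graph_def by blast+

lemma cmp_path:
  assumes "l \<in> paths G" "m \<in> paths G" "sc G l = rg G m"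
  shows "cmp G l m \<in> paths G" "rg G (cmp G l m) = rg G l" "sc G (cmp G l m) = sc G m"
    "dg G (cmp G l m) = dg G l + dg G m"
  using assms is_2graph unfolding is_2graph_def by blast+

lemma cmp_assoc:
  assumes "l \<in> paths G" "m \<in> paths G" "k \<in> paths G" "sc G l = rg G m" "sc G m = rg G k"
  shows "cmp G (cmp G l m) k = cmp G l (cmp G m k)"
  using assms is_2graph unfolding is_2graph_def by blast

lemma unique_factorisation:
  assumes "l \<in> paths G" "dg G l = m + n"
  shows "\<exists>!p. fst p \<in> paths G \<and> snd p \<in> paths G \<and> dg G (fst p) = m \<and> dg G (snd p) = n \<and>
    sc G (fst p) = rg G (snd p) \<and> cmp G (fst p) (snd p) = l"
  using assms is_2graph unfolding is_2graph_def by blast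

lemma factorisation:
  assumes "l \<in> paths G" "dg G l = m + n"
  obtains a b where "a \<in> paths G" "b \<in> paths G" "dg G a = m" "dg G b = n"
    "sc G a = rg G b" "cmp G a b = l"
  using ex1_implies_ex[OF unique_factorisation[OF assms]] by blast

lemma cmp_cancel:
  assumes "a \<in> paths G" "b \<in> paths G" "a' \<in> paths G" "b' \<in> paths G"
    and "sc G a = rg G b" "sc G a' = rg G b'" "dg G a = dg G a'"
    and "cmp G a b = cmp G a' b'"
  shows "a = a'" "b = b'"
proof -
  let ?l = "cmp G a b"
  have l: "?l \<in> paths G" and dl: "dg G ?l = dg G a + dg G b"
    using cmp_path(1,4)[OF assms(1,2,5)] by simp_all
  have "dg G ?l = dg G a' + dg G b'"
    using cmp_path(4)[OF assms(3,4,6)] assms(8) by simp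
  with dl assms(7) have "dg G b' = dg G b" by simp
  then have "(a, b) = (a', b')"
    using the1_equality[OF unique_factorisation[OF l dl], of "(a, b)"]
      the1_equality[OF unique_factorisation[OF l dl], of "(a', b')"] assms by simp
  then show "a = a'" "b = b'" by simp_all
qed

lemma dg_rg: "l \<in> paths G \<Longrightarrow> dg G (rg G l) = 0"
  using cmp_path(4)[of "rg G l" l] path_ends[of l] by (metis add_cancel_right_left)

lemma dg_sc: "l \<in> paths G \<Longrightarrow> dg G (sc G l) = 0"
  using cmp_path(4)[of l "sc G l"] path_ends[of l] by (metis add_cancel_left_right)

lemma sc_vertex: "l \<in> paths G \<Longrightarrow> sc G l \<in> vertices G"
  using path_ends(2) dg_sc unfolding vertices_def by blast

lemma rg_vertex: "l \<in> paths G \<Longrightarrow> rg G l \<in> vertices G"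
  using path_ends(1) dg_rg unfolding vertices_def by blast

lemma commute_factors:
  assumes "a \<in> paths G" "b \<in> paths G" "sc G a = rg G b"
  obtains b' a' where "b' \<in> paths G" "a' \<in> paths G" "dg G b' = dg G b" "dg G a' = dg G a"
    "sc G b' = rg G a'" "cmp G b' a' = cmp G a b" "rg G b' = rg G a" "sc G a' = sc G b"
proof -
  have "dg G (cmp G a b) = dg G b + dg G a"
    using cmp_path(4) assms by (simp add: add.commute)
  then obtain b' a' where "b' \<in> paths G" "a' \<in> paths G" "dg G b' = dg G b" "dg G a' = dg G a"
    "sc G b' = rg G a'" "cmp G b' a' = cmp G a b"
    using factorisation cmp_path(1) assms by metis
  moreover from this have "rg G b' = rg G a" "sc G a' = sc G b"
    using cmp_path(2,3) assms by metis+
  ultimately show ?thesis using that by blast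
qed

lemma seg_eqI:
  assumes "a \<in> paths G" "u \<in> paths G" "b \<in> paths G" "sc G a = rg G u" "sc G u = rg G b"
  shows "seg G (cmp G (cmp G a u) b) (dg G a) (dg G a + dg G u) = u"
  unfolding seg_def
proof (rule the_equality)
  show "\<exists>a' b'. a' \<in> paths G \<and> u \<in> paths G \<and> b' \<in> paths G \<and> dg G a' = dg G a \<and>
      dg G u = dg G a + dg G u - dg G a \<and> sc G a' = rg G u \<and> sc G u = rg G b' \<and>
      cmp G (cmp G a u) b = cmp G (cmp G a' u) b'"
    using assms by auto
next
  fix u' assume "\<exists>a' b'. a' \<in> paths G \<and> u' \<in> paths G \<and> b' \<in> paths G \<and> dg G a' = dg G a \<and>
      dg G u' = dg G a + dg G u - dg G a \<and> sc G a' = rg G u' \<and> sc G u' = rg G b' \<and>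
      cmp G (cmp G a u) b = cmp G (cmp G a' u') b'"
  then obtain a' b' where a': "a' \<in> paths G" "u' \<in> paths G" "b' \<in> paths G" "dg G a' = dg G a"
      "dg G u' = dg G u" "sc G a' = rg G u'" "sc G u' = rg G b'"
      "cmp G (cmp G a u) b = cmp G (cmp G a' u') b'"
    by auto
  have "cmp G a u = cmp G a' u'"
    using cmp_cancel(1)[of "cmp G a u" b "cmp G a' u'" b'] cmp_path assms a' by simp
  then show "u' = u"
    using cmp_cancel(2)[of a u a' u'] assms a' by simp
qed

lemma seg_prefix_end:
  assumes "a \<in> paths G" "b \<in> paths G" "sc G a = rg G b"
  shows "seg G (cmp G a b) (dg G a) (dg G a) = sc G a"
proof -
  have "seg G (cmp G (cmp G a (sc G a)) b) (dg G a) (dg G a + dg G (sc G a)) = sc G a"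
    by (rule seg_eqI) (use path_ends assms in auto)
  moreover have "cmp G a (sc G a) = a" "dg G (sc G a) = 0"
    using path_ends(8) dg_sc assms(1) by auto
  ultimately show ?thesis by simp
qed

end

lemma red_closedD:
  assumes "red_closed G X" "v \<in> X"
  shows "red_edges_to G v = {red_edge_to G v}" "red_source G v \<in> X"
  using assms unfolding red_closed_def red_source_def red_edge_to_def by auto

lemma red_loopD:
  assumes "red_loop G x k" "j < k"
  shows "red_edges_to G (x j) = {red_edge_to G (x j)}" "red_source G (x j) = x (Suc j)"
proof -
  obtain e where "red_edges_to G (x j) = {e}" "sc G e = x (Suc j)"
    using assms unfolding red_loop_def by blast
  then show "red_edges_to G (x j) = {red_edge_to G (x j)}" "red_source G (x j) = x (Suc j)"
    unfolding red_source_def red_edge_to_def by simp_all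
qed

lemma red_loop_closed:
  assumes "red_loop G x k"
  shows "red_closed G (x ` {..<k})"
  unfolding red_closed_def
proof
  fix v assume "v \<in> x ` {..<k}"
  then obtain j where j: "j < k" "v = x j" by blast
  have "x (Suc j) \<in> x ` {..<k}"
  proof (cases "Suc j = k")
    case True
    then have "x (Suc j) = x 0" "0 < k" using assms unfolding red_loop_def by simp_all
    then show ?thesis by (simp add: rev_image_eqI)
  qed (use j(1) in simp)
  then have "red_edges_to G v = {red_edge_to G v} \<and> sc G (red_edge_to G v) \<in> x ` {..<k}"
    using red_loopD[OF assms j(1)] unfolding j(2) red_source_def by simp
  then show "\<exists>e. red_edges_to G v = {e} \<and> sc G e \<in> x ` {..<k}" by blast
qed

lemma red_loop_inj:
  assumes "red_loop G x k"
  shows "inj_on (red_source G) (x ` {..<k})"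
proof (rule finite_surj_inj)
  have "x j \<in> red_source G ` x ` {..<k}" if "j < k" for j
  proof (cases j)
    case 0
    have "x 0 = red_source G (x (k - 1))"
      using red_loopD(2)[OF assms, of "k - 1"] assms unfolding red_loop_def by simp
    then show ?thesis using 0 assms unfolding red_loop_def by simp
  next
    case (Suc i)
    with that have "i < k" by simp
    then have "red_source G (x i) = x j" using red_loopD(2)[OF assms] Suc by simp
    then show ?thesis using \<open>i < k\<close> by (intro image_eqI[of _ _ "x i"]) auto
  qed
  then show "x ` {..<k} \<subseteq> red_source G ` x ` {..<k}" by blast
qed simp

lemma red_loop_invariant:
  fixes f :: "'a \<Rightarrow> 'b :: order"
  assumes "red_loop G x k" and mono: "\<And>v. v \<in> x ` {..<k} \<Longrightarrow> f v \<le> f (red_source G v)"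
    and "v \<in> x ` {..<k}"
  shows "f v = f (x 0)"
proof -
  obtain j where j: "j < k" "v = x j" using assms(3) by blast
  have step: "f (x i) \<le> f (x (Suc i))" if "i \<in> {..<k}" for i
    using mono[of "x i"] red_loopD(2)[OF assms(1)] that by simp
  have "(f \<circ> x) 0 \<le> (f \<circ> x) j" "(f \<circ> x) j \<le> (f \<circ> x) k"
    by (rule lift_Suc_mono_le_ivl[of "{..<k}"]; use step j(1) in auto)+
  moreover have "x k = x 0" using assms(1) unfolding red_loop_def by simp
  ultimately show ?thesis using j(2) by simp
qed

context two_graph
begin

lemma red_loop_vertices:
  assumes "red_loop G x k"
  shows "x ` {..<k} \<subseteq> vertices G"
proof
  fix v assume "v \<in> x ` {..<k}"
  then obtain j where "j < k" "v = x j" by blast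
  then have "red_edge_to G v \<in> red_edges_to G v" using red_loopD(1)[OF assms] by simp
  then show "v \<in> vertices G" using rg_vertex[of "red_edge_to G v"] unfolding red_edges_to_def by simp
qed

lemma isolated_prefix_unique:
  assumes "isolated G l" "y \<in> paths G" "rg G y = rg G l" "dg G y \<le> dg G l"
  shows "seg G l 0 (dg G y) = y"
proof (rule ccontr)
  assume "seg G l 0 (dg G y) \<noteq> y"
  then have "y \<in> {x \<in> paths G. rg G x = rg G l \<and> dg G x = dg G y} - {seg G l 0 (dg G y)}"
    using assms(2,3) by auto
  then show False using assms(1,4) unfolding isolated_def by blast
qed

lemma isolated_extension_unique:
  assumes "isolated G l" "a \<in> paths G" "rg G a = rg G l" "e \<in> paths G" "e' \<in> paths G"
    and "sc G a = rg G e" "sc G a = rg G e'" "dg G e' = dg G e" "dg G a + dg G e \<le> dg G l"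
  shows "e' = e"
proof -
  have "cmp G a e' = seg G l 0 (dg G a + dg G e)"
    using isolated_prefix_unique[OF assms(1) cmp_path(1)[OF assms(2,5,7)]] cmp_path(2,4)[OF assms(2,5,7)]
      assms(3,8,9) by simp
  also have "\<dots> = cmp G a e"
    using isolated_prefix_unique[OF assms(1) cmp_path(1)[OF assms(2,4,6)]] cmp_path(2,4)[OF assms(2,4,6)]
      assms(3,9) by simp
  finally show ?thesis using cmp_cancel(2)[OF assms(2,5,2,4,7,6)] by simp
qed

lemma isolated_red_cycle_edge:
  assumes l: "l \<in> paths G" "isolated G l" "dg G l = (0, k)" and "j < k"
  shows "\<exists>e. red_edges_to G (seg G l (0, j) (0, j)) = {e} \<and> sc G e = seg G l (0, Suc j) (0, Suc j)"
proof -
  have "dg G l = (0, Suc j) + (0, k - Suc j)" using l(3) \<open>j < k\<close> by simp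
  then obtain a b where ab: "a \<in> paths G" "b \<in> paths G" "dg G a = (0, Suc j)"
      "sc G a = rg G b" "cmp G a b = l"
    by (rule factorisation[OF l(1)])
  have "dg G a = (0, j) + (0, 1)" using ab(3) by simp
  then obtain a1 e where a1e: "a1 \<in> paths G" "e \<in> paths G" "dg G a1 = (0, j)" "dg G e = (0, 1)"
      "sc G a1 = rg G e" "cmp G a1 e = a"
    by (rule factorisation[OF ab(1)])
  have eb: "sc G e = rg G b" using cmp_path(3)[OF a1e(1,2,5)] a1e(6) ab(4) by simp
  have "l = cmp G a1 (cmp G e b)"
    using cmp_assoc[OF a1e(1,2) ab(2) a1e(5) eb] a1e(6) ab(5) by simp
  then have xj: "seg G l (0, j) (0, j) = sc G a1"
    using seg_prefix_end[OF a1e(1) cmp_path(1)[OF a1e(2) ab(2) eb]] cmp_path(2)[OF a1e(2) ab(2) eb]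
      a1e(3,5) by simp
  have xSj: "seg G l (0, Suc j) (0, Suc j) = sc G e"
    using seg_prefix_end[OF ab(1,2,4)] ab(3,5) cmp_path(3)[OF a1e(1,2,5)] a1e(6) by simp
  have "rg G a1 = rg G a" using cmp_path(2)[OF a1e(1,2,5)] unfolding a1e(6) ..
  also have "\<dots> = rg G l" using cmp_path(2)[OF ab(1,2,4)] unfolding ab(5) ..
  finally have rg_a1: "rg G a1 = rg G l" .
  have "red_edges_to G (sc G a1) = {e}"
  proof
    show "{e} \<subseteq> red_edges_to G (sc G a1)" using a1e unfolding red_edges_to_def by simp
    have "dg G a1 + dg G e \<le> dg G l" using a1e(3,4) l(3) \<open>j < k\<close> by (simp add: less_eq_prod_def)
    then show "red_edges_to G (sc G a1) \<subseteq> {e}"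
      using isolated_extension_unique[OF l(2) a1e(1) rg_a1 a1e(2)] a1e(4,5)
      unfolding red_edges_to_def by auto
  qed
  then show ?thesis unfolding xj xSj by blast
qed

lemma isolated_red_cycle_loop:
  assumes "is_cycle G l" "isolated G l" "red_path G l"
  shows "\<exists>x k. red_loop G x k \<and> cycle_vertices G l = x ` {..<k}"
proof -
  define k where "k = snd (dg G l)"
  define x where "x j = seg G l (0, j) (0, j)" for j
  have l: "l \<in> paths G" "rg G l = sc G l" "dg G l \<noteq> 0"
    using assms(1) unfolding is_cycle_def by auto
  have dl: "dg G l = (0, k)"
    using assms(3) unfolding red_path_def k_def by (metis prod.collapse)
  have "x 0 = sc G (rg G l)"
    using seg_prefix_end[OF path_ends(1)[OF l(1)] l(1)] path_ends(4,7)[OF l(1)] dg_rg[OF l(1)]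
    unfolding x_def by (simp add: zero_prod_def)
  moreover have "x k = sc G l"
    using seg_prefix_end[OF l(1) path_ends(2)[OF l(1)]] path_ends(5,8)[OF l(1)] dl
    unfolding x_def by simp
  ultimately have "x k = x 0" using path_ends(4)[OF l(1)] l(2) by simp
  moreover have "0 < k" using l(3) dl by (simp add: zero_prod_def)
  moreover have "\<forall>j<k. \<exists>e. red_edges_to G (x j) = {e} \<and> sc G e = x (Suc j)"
    using isolated_red_cycle_edge[OF l(1) assms(2) dl] unfolding x_def by blast
  ultimately have loop: "red_loop G x k" unfolding red_loop_def by blast
  have "cycle_vertices G l = x ` {..k}"
    unfolding cycle_vertices_def x_def dl by (force simp: less_eq_prod_def)
  also have "\<dots> = x ` {..<k}"
    using \<open>x k = x 0\<close> \<open>0 < k\<close> by (force simp: atMost_def le_less)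
  finally show ?thesis using loop by blast
qed

lemma cycle_class_loop:
  assumes "X \<in> cycle_classes G V n"
  obtains x k where "red_loop G x k" "X = x ` {..<k}"
  using assms isolated_red_cycle_loop unfolding cycle_classes_def by blast

end

lemma finite_blue_edges:
  assumes "row_finite G" "finite X" "X \<subseteq> vertices G"
  shows "finite (blue_edges G X Y)"
proof (rule finite_subset)
  show "blue_edges G X Y \<subseteq> (\<Union>v\<in>X. {l \<in> paths G. rg G l = v \<and> dg G l = (1, 0)})"
    unfolding blue_edges_def by auto
  show "finite (\<Union>v\<in>X. {l \<in> paths G. rg G l = v \<and> dg G l = (1, 0)})"
    using assms unfolding row_finite_def by blast
qed

lemma card_blue_edges_sum_from:
  assumes "finite X" "\<And>v. v \<in> X \<Longrightarrow> finite (blue_edges G {v} Y)"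
  shows "card (blue_edges G X Y) = (\<Sum>v\<in>X. card (blue_edges G {v} Y))"
proof -
  have "blue_edges G X Y = (\<Union>v\<in>X. blue_edges G {v} Y)" unfolding blue_edges_def by auto
  also have "card \<dots> = (\<Sum>v\<in>X. card (blue_edges G {v} Y))"
    by (rule card_UN_disjoint) (use assms in \<open>auto simp: blue_edges_def\<close>)
  finally show ?thesis .
qed

lemma card_blue_edges_sum_to:
  assumes "finite Y" "\<And>w. w \<in> Y \<Longrightarrow> finite (blue_edges G X {w})"
  shows "card (blue_edges G X Y) = (\<Sum>w\<in>Y. card (blue_edges G X {w}))"
proof -
  have "blue_edges G X Y = (\<Union>w\<in>Y. blue_edges G X {w})" unfolding blue_edges_def by auto
  also have "card \<dots> = (\<Sum>w\<in>Y. card (blue_edges G X {w}))"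
    by (rule card_UN_disjoint) (use assms in \<open>auto simp: blue_edges_def\<close>)
  finally show ?thesis .
qed

lemma Amat_eqI:
  assumes "X \<noteq> {}" "\<And>v. v \<in> X \<Longrightarrow> card (blue_edges G {v} Y) = c"
  shows "Amat G Y X = c"
  using assms someI_ex[of "\<lambda>v. v \<in> X"] unfolding Amat_def by blast

lemma Bmat_eqI:
  assumes "Y \<noteq> {}" "\<And>w. w \<in> Y \<Longrightarrow> card (blue_edges G X {w}) = c"
  shows "Bmat G Y X = c"
  using assms someI_ex[of "\<lambda>w. w \<in> Y"] unfolding Bmat_def by blast

context two_graph
begin

lemma blue_red_commute:
  assumes "e \<in> paths G" "dg G e = (1, 0)" "g \<in> red_edges_to G (sc G e)"
  obtains f e' where "f \<in> red_edges_to G (rg G e)" "e' \<in> paths G" "dg G e' = (1, 0)"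
    "sc G f = rg G e'" "sc G e' = sc G g" "cmp G f e' = cmp G e g"
proof -
  have g: "g \<in> paths G" "dg G g = (0, 1)" "sc G e = rg G g"
    using assms(3) unfolding red_edges_to_def by auto
  obtain f e' where "f \<in> paths G" "e' \<in> paths G" "dg G f = dg G g" "dg G e' = dg G e"
      "sc G f = rg G e'" "cmp G f e' = cmp G e g" "rg G f = rg G e" "sc G e' = sc G g"
    by (rule commute_factors[OF assms(1) g(1,3)])
  then show ?thesis using that g(2) assms(2) unfolding red_edges_to_def by simp
qed

lemma card_blue_edges_from_le_source:
  assumes "row_finite G" "red_closed G Y" "red_edges_to G v = {f}"
  shows "card (blue_edges G {v} Y) \<le> card (blue_edges G {sc G f} Y)"
proof (rule card_le_if_inj_on_rel[where r = "\<lambda>e e'. cmp G f e' = cmp G e (red_edge_to G (sc G e))"])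
  have "f \<in> paths G" using assms(3) unfolding red_edges_to_def by blast
  then show "finite (blue_edges G {sc G f} Y)"
    using finite_blue_edges[OF assms(1)] sc_vertex by simp
next
  fix e assume "e \<in> blue_edges G {v} Y"
  then have e: "e \<in> paths G" "dg G e = (1, 0)" "rg G e = v" "sc G e \<in> Y"
    unfolding blue_edges_def by auto
  let ?g = "red_edge_to G (sc G e)"
  have g: "?g \<in> red_edges_to G (sc G e)" "sc G ?g \<in> Y"
    using red_closedD[OF assms(2) e(4)] unfolding red_source_def by auto
  obtain f' e' where "f' \<in> red_edges_to G (rg G e)" "e' \<in> paths G" "dg G e' = (1, 0)"
      "sc G f' = rg G e'" "sc G e' = sc G ?g" "cmp G f' e' = cmp G e ?g"
    by (rule blue_red_commute[OF e(1,2) g(1)])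
  with assms(3) e(3) g(2) show "\<exists>e'. e' \<in> blue_edges G {sc G f} Y \<and> cmp G f e' = cmp G e ?g"
    unfolding blue_edges_def by auto
next
  fix e1 e2 e' assume "e1 \<in> blue_edges G {v} Y" "e2 \<in> blue_edges G {v} Y"
    and "cmp G f e' = cmp G e1 (red_edge_to G (sc G e1))" "cmp G f e' = cmp G e2 (red_edge_to G (sc G e2))"
  moreover have "red_edge_to G (sc G e) \<in> red_edges_to G (sc G e)" if "e \<in> blue_edges G {v} Y" for e
    using red_closedD(1)[OF assms(2)] that unfolding blue_edges_def by auto
  ultimately show "e1 = e2"
    using cmp_cancel(1)[of e1 "red_edge_to G (sc G e1)" e2 "red_edge_to G (sc G e2)"]
    unfolding blue_edges_def red_edges_to_def by auto
qed

lemma card_blue_edges_to_le_source: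
  assumes "row_finite G" "red_closed G X" "inj_on (red_source G) X" "finite X" "X \<subseteq> vertices G"
    and "red_edges_to G w = {g}"
  shows "card (blue_edges G X {w}) \<le> card (blue_edges G X {sc G g})"
proof (rule card_le_if_inj_on_rel[where
      r = "\<lambda>e' e. red_source G (rg G e') = rg G e \<and> cmp G (red_edge_to G (rg G e')) e = cmp G e' g"])
  show "finite (blue_edges G X {sc G g})" using finite_blue_edges assms(1,4,5) .
next
  fix e' assume "e' \<in> blue_edges G X {w}"
  then have e': "e' \<in> paths G" "dg G e' = (1, 0)" "rg G e' \<in> X" "sc G e' = w"
    unfolding blue_edges_def by auto
  obtain f e where "f \<in> red_edges_to G (rg G e')" "e \<in> paths G" "dg G e = (1, 0)"
      "sc G f = rg G e" "sc G e = sc G g" "cmp G f e = cmp G e' g"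
    by (rule blue_red_commute[OF e'(1,2)]) (use assms(6) e'(4) in simp)
  moreover have "red_edges_to G (rg G e') = {red_edge_to G (rg G e')}" "red_source G (rg G e') \<in> X"
    using red_closedD[OF assms(2) e'(3)] by auto
  ultimately show "\<exists>e. e \<in> blue_edges G X {sc G g} \<and>
      red_source G (rg G e') = rg G e \<and> cmp G (red_edge_to G (rg G e')) e = cmp G e' g"
    unfolding blue_edges_def red_source_def by auto
next
  fix e1 e2 e assume e12: "e1 \<in> blue_edges G X {w}" "e2 \<in> blue_edges G X {w}"
    and r: "red_source G (rg G e1) = rg G e \<and> cmp G (red_edge_to G (rg G e1)) e = cmp G e1 g"
      "red_source G (rg G e2) = rg G e \<and> cmp G (red_edge_to G (rg G e2)) e = cmp G e2 g"
  have "rg G e1 = rg G e2"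
    using inj_onD[OF assms(3)] r e12 unfolding blue_edges_def by auto
  then have "cmp G e1 g = cmp G e2 g" using r by simp
  moreover have "g \<in> paths G" "rg G g = w" using assms(6) unfolding red_edges_to_def by auto
  ultimately show "e1 = e2"
    using cmp_cancel(1)[of e1 g e2 g] e12 unfolding blue_edges_def by auto
qed

lemma card_blue_edges_from_loop:
  assumes "row_finite G" "red_loop G x k" "red_closed G Y" "v \<in> x ` {..<k}"
  shows "card (blue_edges G {v} Y) = card (blue_edges G {x 0} Y)"
proof (rule red_loop_invariant[OF assms(2) _ assms(4)])
  fix u assume "u \<in> x ` {..<k}"
  then have "red_edges_to G u = {red_edge_to G u}"
    using red_closedD(1)[OF red_loop_closed[OF assms(2)]] by blast
  then show "card (blue_edges G {u} Y) \<le> card (blue_edges G {red_source G u} Y)"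
    using card_blue_edges_from_le_source[OF assms(1,3)] unfolding red_source_def by blast
qed

lemma card_blue_edges_to_loop:
  assumes "row_finite G" "red_loop G x k" "red_loop G y k'" "w \<in> y ` {..<k'}"
  shows "card (blue_edges G (x ` {..<k}) {w}) = card (blue_edges G (x ` {..<k}) {y 0})"
proof (rule red_loop_invariant[OF assms(3) _ assms(4)])
  fix u assume "u \<in> y ` {..<k'}"
  then have "red_edges_to G u = {red_edge_to G u}"
    using red_closedD(1)[OF red_loop_closed[OF assms(3)]] by blast
  then show "card (blue_edges G (x ` {..<k}) {u}) \<le> card (blue_edges G (x ` {..<k}) {red_source G u})"
    using card_blue_edges_to_le_source[OF assms(1) red_loop_closed[OF assms(2)] red_loop_inj[OF assms(2)]
        _ red_loop_vertices[OF assms(2)]]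
    unfolding red_source_def by blast
qed

lemma red_loop_blue_edges:
  assumes "row_finite G" "red_loop G x k" "red_loop G y k'"
    and X: "X = x ` {..<k}" and Y: "Y = y ` {..<k'}"
  shows "\<forall>v\<in>X. card (blue_edges G {v} Y) = Amat G Y X"
    "\<forall>w\<in>Y. card (blue_edges G X {w}) = Bmat G Y X"
    "Amat G Y X * card X = card (blue_edges G X Y)"
    "card (blue_edges G X Y) = card Y * Bmat G Y X"
proof -
  have "0 < k" "0 < k'" using assms(2,3) unfolding red_loop_def by simp_all
  then have ne: "X \<noteq> {}" "Y \<noteq> {}" using X Y by auto
  have "card (blue_edges G {v} Y) = card (blue_edges G {x 0} Y)" if "v \<in> X" for v
    using card_blue_edges_from_loop[OF assms(1,2) red_loop_closed[OF assms(3)]] that X Y by simp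
  then show A: "\<forall>v\<in>X. card (blue_edges G {v} Y) = Amat G Y X"
    using Amat_eqI[OF ne(1)] by metis
  have "card (blue_edges G X {w}) = card (blue_edges G X {y 0})" if "w \<in> Y" for w
    using card_blue_edges_to_loop[OF assms(1,2,3)] that X Y by simp
  then show B: "\<forall>w\<in>Y. card (blue_edges G X {w}) = Bmat G Y X"
    using Bmat_eqI[OF ne(2)] by metis
  have fin: "finite X" "X \<subseteq> vertices G" "finite Y" "Y \<subseteq> vertices G"
    using red_loop_vertices[OF assms(2)] red_loop_vertices[OF assms(3)] X Y by auto
  have "card (blue_edges G X Y) = (\<Sum>v\<in>X. card (blue_edges G {v} Y))"
    by (rule card_blue_edges_sum_from) (use fin finite_blue_edges[OF assms(1)] in auto)
  then show "Amat G Y X * card X = card (blue_edges G X Y)" using A by simp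
  have "card (blue_edges G X Y) = (\<Sum>w\<in>Y. card (blue_edges G X {w}))"
    by (rule card_blue_edges_sum_to) (use fin finite_blue_edges[OF assms(1)] in auto)
  then show "card (blue_edges G X Y) = card Y * Bmat G Y X" using B by simp
qed

end

lemma sum_mult_Tmat:
  assumes "finite C" "X \<in> C"
  shows "(\<Sum>X'\<in>C. f X' * Tmat X' X) = f X * card X"
proof -
  have "(\<Sum>X'\<in>C. f X' * Tmat X' X) = (\<Sum>X'\<in>C. if X' = X then f X * card X else 0)"
    by (rule sum.cong) (auto simp: Tmat_def)
  then show ?thesis using assms by simp
qed

lemma sum_Tmat_mult:
  assumes "finite D" "Y \<in> D"
  shows "(\<Sum>Y'\<in>D. Tmat Y Y' * g Y') = card Y * g Y"
proof -
  have "(\<Sum>Y'\<in>D. Tmat Y Y' * g Y') = (\<Sum>Y'\<in>D. if Y = Y' then card Y * g Y else 0)"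
    by (rule sum.cong) (auto simp: Tmat_def)
  then show ?thesis using assms by simp
qed

locale rank2_bratteli_diagram =
  fixes G :: "'a twograph" and N :: enat and V :: "nat \<Rightarrow> 'a set"
  assumes diagram: "rank2_bratteli G N V"
begin

sublocale two_graph G
  using diagram unfolding rank2_bratteli_def by unfold_locales blast

lemma row_finite: "row_finite G"
  using diagram unfolding rank2_bratteli_def by blast

lemma finite_level: "enat n \<le> N \<Longrightarrow> finite (V n)"
  using diagram unfolding rank2_bratteli_def by blast

lemma vertex_level: "v \<in> vertices G \<Longrightarrow> \<exists>n. enat n \<le> N \<and> v \<in> V n"
  using diagram unfolding rank2_bratteli_def by blast

lemma level_unique: "enat m \<le> N \<Longrightarrow> enat n \<le> N \<Longrightarrow> v \<in> V m \<Longrightarrow> v \<in> V n \<Longrightarrow> m = n"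
  using diagram unfolding rank2_bratteli_def by blast

lemma blue_edge_levels:
  "e \<in> paths G \<Longrightarrow> dg G e = (1, 0) \<Longrightarrow>
    \<exists>n. enat (Suc n) \<le> N \<and> rg G e \<in> V n \<and> sc G e \<in> V (Suc n)"
  using diagram unfolding rank2_bratteli_def by blast

lemma red_edge_level:
  "e \<in> paths G \<Longrightarrow> dg G e = (0, 1) \<Longrightarrow> \<exists>n. enat n \<le> N \<and> rg G e \<in> V n \<and> sc G e \<in> V n"
  using diagram unfolding rank2_bratteli_def by blast

lemma level_vertex: "enat n \<le> N \<Longrightarrow> v \<in> V n \<Longrightarrow> v \<in> vertices G"
  using diagram unfolding rank2_bratteli_def by (elim conjE) blast

lemma vertex_on_isolated_red_cycle:
  "v \<in> vertices G \<Longrightarrow> \<exists>l. is_cycle G l \<and> isolated G l \<and> red_path G l \<and> v \<in> cycle_vertices G l"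
  using diagram unfolding rank2_bratteli_def by (elim conjE) (erule bspec)

lemma blue_edge_into_vertex:
  assumes "v \<in> V n" "0 < n" "enat n \<le> N"
  shows "\<exists>e\<in>paths G. dg G e = (1, 0) \<and> sc G e = v"
proof (rule ccontr)
  assume "\<not> ?thesis"
  then have "{e \<in> paths G. dg G e = (1, 0) \<and> sc G e = v} = {}" by blast
  then have "v \<in> V 0"
    using level_vertex[OF assms(3,1)] diagram unfolding rank2_bratteli_def by (elim conjE) blast
  moreover have "enat 0 \<le> N" by (simp add: zero_enat_def[symmetric])
  ultimately show False using level_unique[of 0 n v] assms by simp
qed

lemma blue_edge_from_vertex:
  assumes "v \<in> V n" "enat n < N"
  shows "\<exists>e\<in>paths G. dg G e = (1, 0) \<and> rg G e = v"
proof (rule ccontr)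
  assume "\<not> ?thesis"
  then have "{e \<in> paths G. dg G e = (1, 0) \<and> rg G e = v} = {}" by blast
  moreover have "v \<in> vertices G" using level_vertex assms order_less_imp_le by blast
  ultimately have "N \<noteq> \<infinity>" "v \<in> V (the_enat N)"
    using diagram unfolding rank2_bratteli_def by (elim conjE, blast)+
  then show False
    using assms level_unique[of n "the_enat N" v] by (cases N) auto
qed

lemma red_loop_level:
  assumes "red_loop G x k" "x 0 \<in> V m" "enat m \<le> N" "j \<le> k"
  shows "x j \<in> V m"
  using assms(4)
proof (induction j)
  case (Suc j)
  let ?e = "red_edge_to G (x j)"
  have "?e \<in> red_edges_to G (x j)" "sc G ?e = x (Suc j)"
    using red_loopD[OF assms(1)] Suc.prems unfolding red_source_def by auto
  then have "?e \<in> paths G" "dg G ?e = (0, 1)" "rg G ?e = x j" "sc G ?e = x (Suc j)"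
    unfolding red_edges_to_def by auto
  then obtain n where "enat n \<le> N" "x j \<in> V n" "x (Suc j) \<in> V n"
    using red_edge_level by metis
  moreover have "x j \<in> V m" using Suc by simp
  ultimately show ?case using level_unique assms(3) by metis
qed (use assms in simp)

lemma cycle_class_subset_level:
  assumes "enat n \<le> N" "X \<in> cycle_classes G V n"
  shows "X \<subseteq> V n"
proof -
  obtain x k where loop: "red_loop G x k" and X: "X = x ` {..<k}"
    using cycle_class_loop[OF assms(2)] .
  obtain v where "v \<in> X" "v \<in> V n"
    using assms(2) X unfolding cycle_classes_def by blast
  then obtain j where j: "j < k" "x j \<in> V n" using X by blast
  have "0 < k" using loop unfolding red_loop_def by simp
  then obtain m where m: "enat m \<le> N" "x 0 \<in> V m"
    using vertex_level red_loop_vertices[OF loop] by blast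
  then have "m = n" using red_loop_level[OF loop m(2,1), of j] j level_unique assms(1) by auto
  then show ?thesis using red_loop_level[OF loop] m X by auto
qed

lemma finite_cycle_classes: "enat n \<le> N \<Longrightarrow> finite (cycle_classes G V n)"
  using finite_subset[of "cycle_classes G V n" "Pow (V n)"] cycle_class_subset_level finite_level
  by blast

lemma vertex_in_cycle_class:
  assumes "enat n \<le> N" "v \<in> V n"
  shows "\<exists>X\<in>cycle_classes G V n. v \<in> X"
proof -
  obtain l where "is_cycle G l" "isolated G l" "red_path G l" "v \<in> cycle_vertices G l"
    using vertex_on_isolated_red_cycle level_vertex assms by blast
  then show ?thesis using assms(2) unfolding cycle_classes_def by blast
qed

lemma cycle_class_nonempty:
  assumes "X \<in> cycle_classes G V n"
  shows "X \<noteq> {}"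
  using assms unfolding cycle_classes_def by blast

lemma blue_edges_into_cycle_class:
  assumes "enat n < N" "Y \<in> cycle_classes G V (Suc n)"
  shows "\<exists>X\<in>cycle_classes G V n. blue_edges G X Y \<noteq> {}"
proof -
  have levels: "enat n \<le> N" "enat (Suc n) \<le> N" using assms(1) by (simp_all add: Suc_ile_eq)
  obtain w where w: "w \<in> Y" "w \<in> V (Suc n)"
    using cycle_class_nonempty[OF assms(2)] cycle_class_subset_level[OF levels(2) assms(2)] by blast
  then obtain e where e: "e \<in> paths G" "dg G e = (1, 0)" "sc G e = w"
    using blue_edge_into_vertex levels(2) by blast
  then obtain m where m: "enat (Suc m) \<le> N" "rg G e \<in> V m" "sc G e \<in> V (Suc m)"
    using blue_edge_levels by blast
  then have "Suc m = Suc n" using level_unique[OF m(1) levels(2)] w(2) e(3) by blast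
  then have "rg G e \<in> V n" using m(2) by simp
  then obtain X where "X \<in> cycle_classes G V n" "rg G e \<in> X"
    using vertex_in_cycle_class levels(1) by blast
  then show ?thesis using e w unfolding blue_edges_def by blast
qed

lemma blue_edges_from_cycle_class:
  assumes "enat n < N" "X \<in> cycle_classes G V n"
  shows "\<exists>Y\<in>cycle_classes G V (Suc n). blue_edges G X Y \<noteq> {}"
proof -
  have levels: "enat n \<le> N" "enat (Suc n) \<le> N" using assms(1) by (simp_all add: Suc_ile_eq)
  obtain v where v: "v \<in> X" "v \<in> V n"
    using cycle_class_nonempty[OF assms(2)] cycle_class_subset_level[OF levels(1) assms(2)] by blast
  then obtain e where e: "e \<in> paths G" "dg G e = (1, 0)" "rg G e = v"
    using blue_edge_from_vertex assms(1) by blast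
  then obtain m where m: "enat (Suc m) \<le> N" "rg G e \<in> V m" "sc G e \<in> V (Suc m)"
    using blue_edge_levels by blast
  moreover have "enat m \<le> N" using m(1) Suc_ile_eq order_less_imp_le by blast
  ultimately have "m = n" using level_unique[OF _ levels(1)] v(2) e(3) by blast
  then obtain Y where "Y \<in> cycle_classes G V (Suc n)" "sc G e \<in> Y"
    using vertex_in_cycle_class levels(2) m(3) by blast
  then show ?thesis using e v unfolding blue_edges_def by blast
qed

lemma cycle_classes_blue_edges:
  assumes "X \<in> cycle_classes G V m" "Y \<in> cycle_classes G V n"
  shows "\<forall>v\<in>X. card (blue_edges G {v} Y) = Amat G Y X"
    "\<forall>w\<in>Y. card (blue_edges G X {w}) = Bmat G Y X"
    "Amat G Y X * card X = card (blue_edges G X Y)"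
    "card (blue_edges G X Y) = card Y * Bmat G Y X"
proof -
  obtain x k where x: "red_loop G x k" "X = x ` {..<k}" using cycle_class_loop[OF assms(1)] .
  obtain y k' where y: "red_loop G y k'" "Y = y ` {..<k'}" using cycle_class_loop[OF assms(2)] .
  note counts = red_loop_blue_edges[OF row_finite x(1) y(1) x(2) y(2)]
  show "\<forall>v\<in>X. card (blue_edges G {v} Y) = Amat G Y X" by (fact counts(1))
  show "\<forall>w\<in>Y. card (blue_edges G X {w}) = Bmat G Y X" by (fact counts(2))
  show "Amat G Y X * card X = card (blue_edges G X Y)" by (fact counts(3))
  show "card (blue_edges G X Y) = card Y * Bmat G Y X" by (fact counts(4))
qed

lemma cycle_classes_Amat_Bmat_nonzero:
  assumes "X \<in> cycle_classes G V m" "Y \<in> cycle_classes G V n" "blue_edges G X Y \<noteq> {}"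
  shows "Amat G Y X \<noteq> 0" "Bmat G Y X \<noteq> 0"
proof -
  obtain x k where "red_loop G x k" "X = x ` {..<k}" using cycle_class_loop[OF assms(1)] .
  then have "finite (blue_edges G X Y)"
    using finite_blue_edges[OF row_finite] red_loop_vertices by blast
  then have "card (blue_edges G X Y) \<noteq> 0" using assms(3) by simp
  then show "Amat G Y X \<noteq> 0" "Bmat G Y X \<noteq> 0"
    using cycle_classes_blue_edges[OF assms(1,2)] by (metis mult_0, metis mult_0_right)
qed

end

theorem lemma4p2:
  fixes G :: "'a twograph" and N :: enat and V :: "nat \<Rightarrow> 'a set"
  assumes "rank2_bratteli G N V"
  shows "\<forall>n. enat n < N \<longrightarrow>
    (\<forall>X\<in>cycle_classes G V n. \<forall>Y\<in>cycle_classes G V (Suc n).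
        (\<forall>v\<in>X. card (blue_edges G {v} Y) = Amat G Y X) \<and>
        (\<forall>w\<in>Y. card (blue_edges G X {w}) = Bmat G Y X) \<and>
        Amat G Y X * card X = card (blue_edges G X Y) \<and>
        card (blue_edges G X Y) = card Y * Bmat G Y X) \<and>
    (\<forall>Y\<in>cycle_classes G V (Suc n). \<exists>X\<in>cycle_classes G V n. Amat G Y X \<noteq> 0) \<and>
    (\<forall>X\<in>cycle_classes G V n. \<exists>Y\<in>cycle_classes G V (Suc n). Amat G Y X \<noteq> 0) \<and>
    (\<forall>Y\<in>cycle_classes G V (Suc n). \<exists>X\<in>cycle_classes G V n. Bmat G Y X \<noteq> 0) \<and>
    (\<forall>X\<in>cycle_classes G V n. \<exists>Y\<in>cycle_classes G V (Suc n). Bmat G Y X \<noteq> 0) \<and>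
    (\<forall>Y\<in>cycle_classes G V (Suc n). \<forall>X\<in>cycle_classes G V n.
        (\<Sum>X'\<in>cycle_classes G V n. Amat G Y X' * Tmat X' X) =
        (\<Sum>Y'\<in>cycle_classes G V (Suc n). Tmat Y Y' * Bmat G Y' X))"
proof (intro allI impI)
  fix n assume n: "enat n < N"
  interpret rank2_bratteli_diagram G N V by unfold_locales (rule assms)
  let ?C = "cycle_classes G V n" and ?D = "cycle_classes G V (Suc n)"
  have fin: "finite ?C" "finite ?D"
    using finite_cycle_classes n by (simp_all add: Suc_ile_eq)
  note counts = cycle_classes_blue_edges and nonzero = cycle_classes_Amat_Bmat_nonzero
  have rows: "\<exists>X\<in>?C. Amat G Y X \<noteq> 0 \<and> Bmat G Y X \<noteq> 0" if "Y \<in> ?D" for Y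
    using blue_edges_into_cycle_class[OF n that] nonzero[OF _ that] by blast
  have cols: "\<exists>Y\<in>?D. Amat G Y X \<noteq> 0 \<and> Bmat G Y X \<noteq> 0" if "X \<in> ?C" for X
    using blue_edges_from_cycle_class[OF n that] nonzero[OF that] by blast
  have sums: "(\<Sum>X'\<in>?C. Amat G Y X' * Tmat X' X) = (\<Sum>Y'\<in>?D. Tmat Y Y' * Bmat G Y' X)"
    if "Y \<in> ?D" "X \<in> ?C" for X Y
    using sum_mult_Tmat[OF fin(1) that(2)] sum_Tmat_mult[OF fin(2) that(1)] counts(3,4)[OF that(2,1)]
    by simp
  show "(\<forall>X\<in>?C. \<forall>Y\<in>?D.
        (\<forall>v\<in>X. card (blue_edges G {v} Y) = Amat G Y X) \<and>
        (\<forall>w\<in>Y. card (blue_edges G X {w}) = Bmat G Y X) \<and>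
        Amat G Y X * card X = card (blue_edges G X Y) \<and>
        card (blue_edges G X Y) = card Y * Bmat G Y X) \<and>
    (\<forall>Y\<in>?D. \<exists>X\<in>?C. Amat G Y X \<noteq> 0) \<and> (\<forall>X\<in>?C. \<exists>Y\<in>?D. Amat G Y X \<noteq> 0) \<and>
    (\<forall>Y\<in>?D. \<exists>X\<in>?C. Bmat G Y X \<noteq> 0) \<and> (\<forall>X\<in>?C. \<exists>Y\<in>?D. Bmat G Y X \<noteq> 0) \<and>
    (\<forall>Y\<in>?D. \<forall>X\<in>?C. (\<Sum>X'\<in>?C. Amat G Y X' * Tmat X' X) = (\<Sum>Y'\<in>?D. Tmat Y Y' * Bmat G Y' X))"
    using counts rows cols sums by (intro conjI ballI; meson)
qed

end
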